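(* Let $\gamma>0$, $\beta>0$, $b\in\mathbb{R}$ and fix $t>0$. For $x_3>0$ define \[ u(x_3,t)=\frac{2e^{-bt}}{4\pi\gamma t}\Big[\frac{e^{-\frac{x_3^2}{4\gamma t}}}{\sqrt{4\pi\gamma t}}-\frac{\beta}{2\gamma}e^{\frac{\beta}{\gamma}(x_3+\beta t)}\mathrm{erfc}\Big(\frac{x_3+2\beta t}{\sqrt{4\gamma t}}\Big)\Big],\qquad u_{\rm EBC}(x_3,t)=\frac{e^{-bt}}{(4\pi\gamma t)^{3/2}}\Big(e^{-\frac{x_3^2}{4\gamma t}}-e^{-\frac{(x_3+2\gamma/\beta)^2}{4\gamma t}}\Big). \] Then $u(x_3,t)\neq0$ for all sufficiently large $x_3$, and \[ \lim_{x_3\to\infty}\left|\frac{u_{\rm EBC}(x_3,t)-u(x_3,t)}{u(x_3,t)}\right|=\frac12 . \]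
   Context: $\mathrm{erfc}(\xi)=\frac{2}{\sqrt\pi}\int_\xi^\infty e^{-s^2}ds$. Here $u$ is the exact solution at $x_1=x_2=0$ of the half-space Robin problem with boundary source $\delta(x_1)\delta(x_2)\delta(t)$, and $u_{\rm EBC}$ is the extrapolated-boundary approximation with extrapolation distance $\gamma/\beta$. *)

theory Defs
  imports "HOL-Analysis.Analysis"
begin

definition erfc :: "real \<Rightarrow> real" where
  "erfc \<xi> = 2 / sqrt pi * integral {\<xi>..} (\<lambda>s. exp (- s\<^sup>2))"

text \<open>Exact half-space Robin solution at x1 = x2 = 0.\<close>
definition u_exact :: "real \<Rightarrow> real \<Rightarrow> real \<Rightarrow> real \<Rightarrow> real \<Rightarrow> real" where
  "u_exact \<gamma> \<beta> b x3 t =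
     2 * exp (- b * t) / (4 * pi * \<gamma> * t) *
     (exp (- x3\<^sup>2 / (4 * \<gamma> * t)) / sqrt (4 * pi * \<gamma> * t)
      - \<beta> / (2 * \<gamma>) * exp (\<beta> / \<gamma> * (x3 + \<beta> * t))
          * erfc ((x3 + 2 * \<beta> * t) / sqrt (4 * \<gamma> * t)))"

text \<open>Extrapolated-boundary approximation with extrapolation distance gamma/beta.\<close>
definition u_EBC :: "real \<Rightarrow> real \<Rightarrow> real \<Rightarrow> real \<Rightarrow> real \<Rightarrow> real" where
  "u_EBC \<gamma> \<beta> b x3 t =
     exp (- b * t) / (4 * pi * \<gamma> * t) powr (3/2) *
     (exp (- x3\<^sup>2 / (4 * \<gamma> * t)) - exp (- (x3 + 2 * \<gamma> / \<beta>)\<^sup>2 / (4 * \<gamma> * t)))"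

end

theory Submission imports Defs "HOL-Real_Asymp.Real_Asymp" begin

text \<open>Both solutions factor as a common positive prefactor
  \<open>A = e^{-bt} (4\<pi>\<gamma>t)^{-3/2} e^{-x\<^sub>3\<^sup>2/(4\<gamma>t)}\<close> times a correction:
  \<open>u = 2A(1 - R)\<close> and \<open>u\<^sub>E\<^sub>B\<^sub>C = A(1 - E)\<close>.  The Gaussian tail bound
  \<open>erfc \<xi> \<le> e^{-\<xi>\<^sup>2}/(\<xi>\<surd>\<pi>)\<close> turns the Robin correction \<open>R\<close> into
  \<open>O(1/x\<^sub>3)\<close>, and \<open>E = e^{-((x\<^sub>3+2\<gamma>/\<beta>)\<^sup>2 - x\<^sub>3\<^sup>2)/(4\<gamma>t)}\<close> decays exponentially.
  Hence \<open>u\<^sub>E\<^sub>B\<^sub>C/u \<longrightarrow> 1/2\<close> and the relative error tends to \<open>|1/2 - 1| = 1/2\<close>.\<close>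

lemma has_integral_gaussian_tail_weighted:
  fixes \<xi> :: real
  assumes "\<xi> > 0"
  shows "((\<lambda>s. s / \<xi> * exp (- s\<^sup>2)) has_integral exp (- \<xi>\<^sup>2) / (2 * \<xi>)) {\<xi>..}"
proof (intro has_integral_to_inf integrable_continuous_interval continuous_intros)
  have FTC: "((\<lambda>s. s / \<xi> * exp (- s\<^sup>2)) has_integral
               (- exp (- y\<^sup>2) / (2 * \<xi>) - (- exp (- \<xi>\<^sup>2) / (2 * \<xi>)))) {\<xi>..y}"
    if "y \<ge> \<xi>" for y
    using that assms
    by (intro fundamental_theorem_of_calculus)
       (auto intro!: derivative_eq_intros
             simp flip: has_real_derivative_iff_has_vector_derivative
             simp: field_simps power2_eq_square)
  have "\<forall>\<^sub>F y in at_top. integral {\<xi>..y} (\<lambda>s. s / \<xi> * exp (- s\<^sup>2))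
                          = exp (- \<xi>\<^sup>2) / (2 * \<xi>) - exp (- y\<^sup>2) / (2 * \<xi>)"
    using eventually_ge_at_top[of \<xi>] by eventually_elim (use integral_unique[OF FTC] in simp)
  moreover have "((\<lambda>y. exp (- \<xi>\<^sup>2) / (2 * \<xi>) - exp (- y\<^sup>2) / (2 * \<xi>))
                   \<longlongrightarrow> exp (- \<xi>\<^sup>2) / (2 * \<xi>)) at_top"
  proof -
    have "((\<lambda>y::real. exp (- y\<^sup>2)) \<longlongrightarrow> 0) at_top"
      by real_asymp
    from tendsto_diff[OF tendsto_const tendsto_divide_zero[OF this]]
    show ?thesis
      by simp
  qed
  ultimately show "((\<lambda>y. integral {\<xi>..y} (\<lambda>s. s / \<xi> * exp (- s\<^sup>2)))
                     \<longlongrightarrow> exp (- \<xi>\<^sup>2) / (2 * \<xi>)) at_top"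
    by (simp add: filterlim_cong)
qed (use assms in auto)

lemma erfc_nonneg: "0 \<le> erfc \<xi>"
proof -
  have "0 \<le> integral {\<xi>..} (\<lambda>s. exp (- s\<^sup>2))"
    by (cases "(\<lambda>s. exp (- s\<^sup>2)) integrable_on {\<xi>..}")
       (auto intro: integral_nonneg simp: not_integrable_integral)
  then show ?thesis
    by (simp add: erfc_def)
qed

lemma erfc_le_gaussian_tail:
  fixes \<xi> :: real
  assumes "\<xi> > 0"
  shows "erfc \<xi> \<le> exp (- \<xi>\<^sup>2) / (\<xi> * sqrt pi)"
proof -
  note weighted = has_integral_gaussian_tail_weighted[OF assms]
  have "integral {\<xi>..} (\<lambda>s. exp (- s\<^sup>2)) \<le> exp (- \<xi>\<^sup>2) / (2 * \<xi>)"
  proof (cases "(\<lambda>s. exp (- s\<^sup>2)) integrable_on {\<xi>..}")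
    case True
    have "integral {\<xi>..} (\<lambda>s. exp (- s\<^sup>2)) \<le> integral {\<xi>..} (\<lambda>s. s / \<xi> * exp (- s\<^sup>2))"
    proof (rule integral_le[OF True])
      show "(\<lambda>s. s / \<xi> * exp (- s\<^sup>2)) integrable_on {\<xi>..}"
        using weighted by blast
      fix s assume "s \<in> {\<xi>..}"
      then have "1 \<le> s / \<xi>"
        using assms by simp
      then show "exp (- s\<^sup>2) \<le> s / \<xi> * exp (- s\<^sup>2)"
        using mult_right_mono[of 1 "s / \<xi>" "exp (- s\<^sup>2)"] by simp
    qed
    also have "\<dots> = exp (- \<xi>\<^sup>2) / (2 * \<xi>)"
      using weighted by (rule integral_unique)
    finally show ?thesis .
  qed (use assms in \<open>simp add: not_integrable_integral\<close>)
  then have "erfc \<xi> \<le> 2 / sqrt pi * (exp (- \<xi>\<^sup>2) / (2 * \<xi>))"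
    unfolding erfc_def by (rule mult_left_mono) simp
  also have "\<dots> = exp (- \<xi>\<^sup>2) / (\<xi> * sqrt pi)"
    using assms by (simp add: field_simps)
  finally show ?thesis .
qed

definition robin_correction :: "real \<Rightarrow> real \<Rightarrow> real \<Rightarrow> real \<Rightarrow> real" where
  "robin_correction \<gamma> \<beta> x t =
     sqrt (4 * pi * \<gamma> * t) * \<beta> / (2 * \<gamma>) * exp (\<beta> / \<gamma> * (x + \<beta> * t))
       * erfc ((x + 2 * \<beta> * t) / sqrt (4 * \<gamma> * t)) / exp (- x\<^sup>2 / (4 * \<gamma> * t))"

lemma robin_correction_bounds:
  fixes \<gamma> \<beta> x t :: real
  assumes "\<gamma> > 0" "\<beta> > 0" "t > 0" "x > 0"
  shows "0 \<le> robin_correction \<gamma> \<beta> x t"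
    and "robin_correction \<gamma> \<beta> x t \<le> 2 * \<beta> * t / (x + 2 * \<beta> * t)"
proof -
  define T where "T = 4 * \<gamma> * t"
  define z where "z = (x + 2 * \<beta> * t) / sqrt T"
  have T: "T > 0" and z: "z > 0"
    using assms by (simp_all add: T_def z_def add_pos_pos)
  show "0 \<le> robin_correction \<gamma> \<beta> x t"
    using assms erfc_nonneg by (simp add: robin_correction_def)
  define C where "C = sqrt (pi * T) * \<beta> / (2 * \<gamma>) * exp (\<beta> / \<gamma> * (x + \<beta> * t)) / exp (- x\<^sup>2 / T)"
  have "C \<ge> 0"
    using assms by (simp add: C_def T_def)
  \<comment> \<open>The tail bound's Gaussian \<open>e^{-z\<^sup>2}\<close> exactly cancels the Robin exponential against \<open>e^{-x\<^sup>2/T}\<close>.\<close>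
  have cancel: "exp (\<beta> / \<gamma> * (x + \<beta> * t)) * exp (- z\<^sup>2) = exp (- x\<^sup>2 / T)"
  proof -
    have "z\<^sup>2 = (x + 2 * \<beta> * t)\<^sup>2 / T"
      using T by (simp add: z_def power_divide)
    then have "\<beta> / \<gamma> * (x + \<beta> * t) - z\<^sup>2 = - x\<^sup>2 / T"
      using assms by (simp add: T_def field_simps power2_eq_square)
    then show ?thesis
      by (simp flip: exp_add)
  qed
  have "robin_correction \<gamma> \<beta> x t = C * erfc z"
    by (simp add: robin_correction_def C_def z_def T_def mult.commute)
  also have "\<dots> \<le> C * (exp (- z\<^sup>2) / (z * sqrt pi))"
    using \<open>C \<ge> 0\<close> erfc_le_gaussian_tail[OF z] by (rule mult_left_mono[rotated])
  also have "\<dots> = sqrt T * \<beta> / (2 * \<gamma> * z)"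
    using cancel[symmetric] by (simp add: C_def real_sqrt_mult field_simps)
  also have "\<dots> = T * \<beta> / (2 * \<gamma> * (x + 2 * \<beta> * t))"
    using T by (simp add: z_def)
  also have "\<dots> = (2 * \<gamma>) * (2 * \<beta> * t) / ((2 * \<gamma>) * (x + 2 * \<beta> * t))"
    by (simp add: T_def)
  also have "\<dots> = 2 * \<beta> * t / (x + 2 * \<beta> * t)"
    using assms by (intro mult_divide_mult_cancel_left) simp
  finally show "robin_correction \<gamma> \<beta> x t \<le> 2 * \<beta> * t / (x + 2 * \<beta> * t)" .
qed

lemma robin_correction_tendsto_0:
  fixes \<gamma> \<beta> t :: real
  assumes "\<gamma> > 0" "\<beta> > 0" "t > 0"
  shows "((\<lambda>x. robin_correction \<gamma> \<beta> x t) \<longlongrightarrow> 0) at_top"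
proof (rule tendsto_sandwich[of "\<lambda>_. 0" _ _ "\<lambda>x. 2 * \<beta> * t / (x + 2 * \<beta> * t)"])
  show "\<forall>\<^sub>F x in at_top. 0 \<le> robin_correction \<gamma> \<beta> x t"
    using eventually_gt_at_top[of 0] by eventually_elim (use assms robin_correction_bounds in blast)
  show "\<forall>\<^sub>F x in at_top. robin_correction \<gamma> \<beta> x t \<le> 2 * \<beta> * t / (x + 2 * \<beta> * t)"
    using eventually_gt_at_top[of 0] by eventually_elim (use assms robin_correction_bounds in blast)
  show "((\<lambda>x. 2 * \<beta> * t / (x + 2 * \<beta> * t)) \<longlongrightarrow> 0) at_top"
    by real_asymp
qed simp

lemma exp_neg_shifted_square_diff_tendsto_0:
  fixes c T :: real
  assumes "c > 0" "T > 0"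
  shows "((\<lambda>x. exp (- ((x + c)\<^sup>2 - x\<^sup>2) / T)) \<longlongrightarrow> 0) at_top"
proof -
  have "filterlim (\<lambda>x. - (2 * c * x + c\<^sup>2) / T) at_bot at_top"
    using assms by real_asymp
  then have "((\<lambda>x. exp (- (2 * c * x + c\<^sup>2) / T)) \<longlongrightarrow> 0) at_top"
    using exp_at_bot filterlim_compose by blast
  moreover have "(x + c)\<^sup>2 - x\<^sup>2 = 2 * c * x + c\<^sup>2" for x
    by (simp add: power2_eq_square algebra_simps)
  ultimately show ?thesis
    by simp
qed

lemma powr_three_halves: "(x :: real) > 0 \<Longrightarrow> x powr (3/2) = x * sqrt x"
  by (simp add: powr_add[of x 1 "1/2", simplified] powr_half_sqrt)

lemma u_exact_eq:
  fixes \<gamma> \<beta> b x t :: real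
  assumes "\<gamma> > 0" "t > 0"
  shows "u_exact \<gamma> \<beta> b x t = 2 * (exp (- b * t) / (4 * pi * \<gamma> * t) powr (3/2)
           * exp (- x\<^sup>2 / (4 * \<gamma> * t))) * (1 - robin_correction \<gamma> \<beta> x t)"
  using assms
  by (simp add: u_exact_def robin_correction_def powr_three_halves field_simps)

lemma u_EBC_eq:
  fixes \<gamma> \<beta> b x t :: real
  shows "u_EBC \<gamma> \<beta> b x t = exp (- b * t) / (4 * pi * \<gamma> * t) powr (3/2)
           * exp (- x\<^sup>2 / (4 * \<gamma> * t))
           * (1 - exp (- ((x + 2 * \<gamma> / \<beta>)\<^sup>2 - x\<^sup>2) / (4 * \<gamma> * t)))"
  by (simp add: u_EBC_def algebra_simps diff_divide_distrib flip: exp_add)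

lemma relative_error_tendsto_half:
  fixes u v A R E :: "'a \<Rightarrow> real"
  assumes u: "\<And>x. u x = 2 * A x * (1 - R x)" and v: "\<And>x. v x = A x * (1 - E x)"
    and A: "\<And>x. A x \<noteq> 0"
    and R: "(R \<longlongrightarrow> 0) F" and E: "(E \<longlongrightarrow> 0) F"
  shows "(\<forall>\<^sub>F x in F. u x \<noteq> 0) \<and> ((\<lambda>x. \<bar>(v x - u x) / u x\<bar>) \<longlongrightarrow> 1/2) F"
proof
  have R_lt_1: "\<forall>\<^sub>F x in F. R x < 1"
    using R by (rule order_tendstoD) simp
  then show "\<forall>\<^sub>F x in F. u x \<noteq> 0"
    by eventually_elim (simp add: u A)
  have "((\<lambda>x. \<bar>(1 - E x) / (2 * (1 - R x)) - 1\<bar>) \<longlongrightarrow> \<bar>(1 - 0) / (2 * (1 - 0)) - 1\<bar>) F"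
    by (intro tendsto_intros R E) simp
  then have "((\<lambda>x. \<bar>(1 - E x) / (2 * (1 - R x)) - 1\<bar>) \<longlongrightarrow> 1/2) F"
    by simp
  moreover have "\<forall>\<^sub>F x in F. \<bar>(1 - E x) / (2 * (1 - R x)) - 1\<bar> = \<bar>(v x - u x) / u x\<bar>"
    using R_lt_1
  proof eventually_elim
    case (elim x)
    then have "(1 - E x) / (2 * (1 - R x)) - 1 = (v x - u x) / u x"
      by (simp add: u v A field_simps)
    then show ?case
      by simp
  qed
  ultimately show "((\<lambda>x. \<bar>(v x - u x) / u x\<bar>) \<longlongrightarrow> 1/2) F"
    by (rule Lim_transform_eventually)
qed

theorem mainTheorem6:
  fixes \<gamma> \<beta> b t :: real
  assumes "\<gamma> > 0" and "\<beta> > 0" and "t > 0"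
  shows "(\<forall>\<^sub>F x3 in at_top. u_exact \<gamma> \<beta> b x3 t \<noteq> 0) \<and>
         ((\<lambda>x3. \<bar>(u_EBC \<gamma> \<beta> b x3 t - u_exact \<gamma> \<beta> b x3 t) / u_exact \<gamma> \<beta> b x3 t\<bar>)
            \<longlongrightarrow> 1/2) at_top"
proof (rule relative_error_tendsto_half)
  show "u_exact \<gamma> \<beta> b x t = 2 * (exp (- b * t) / (4 * pi * \<gamma> * t) powr (3/2)
          * exp (- x\<^sup>2 / (4 * \<gamma> * t))) * (1 - robin_correction \<gamma> \<beta> x t)" for x
    using assms(1,3) by (rule u_exact_eq)
  show "((\<lambda>x. robin_correction \<gamma> \<beta> x t) \<longlongrightarrow> 0) at_top"
    using assms by (rule robin_correction_tendsto_0)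
  show "((\<lambda>x. exp (- ((x + 2 * \<gamma> / \<beta>)\<^sup>2 - x\<^sup>2) / (4 * \<gamma> * t))) \<longlongrightarrow> 0) at_top"
    using assms by (intro exp_neg_shifted_square_diff_tendsto_0) simp_all
qed (use assms in \<open>simp_all add: u_EBC_eq\<close>)

end
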